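(* Let $M$ be a manifold of dimension $n\ge3$ with pseudo-Riemannian metric $g$, and let $(\nabla,g,\nabla^* )$ be a conjugate triple of torsion free connections with $\nabla^*$ Ricci symmetric. Then the symmetric bilinear form $B^*:=(n-1)Ric+Ric^*-\tau g$ is gauge invariant: for every smooth $q>0$, if $(\nabla^\sharp,g^\sharp,\nabla^{*\sharp})$ is the gauge transformed triple, then $(n-1)Ric(\nabla^\sharp)+Ric(\nabla^{*\sharp})-\tau^\sharp g^\sharp=B^*$, where $\tau^\sharp$ is the $g^\sharp$-trace of $Ric(\nabla^\sharp)$.
   Context: Conjugate triple: $u\,g(v,w)=g(\nabla_uv,w)+g(v,\nabla^*_uw)$. $Ric:=Ric(\nabla)$, $Ric^*:=Ric(\nabla^* )$, where $Ric(\nabla)(x,y)=\mathrm{Tr}(z\mapsto\mathcal{R}(z,x)y)$ with $\mathcal{R}(u,v)=\nabla_u\nabla_v-\nabla_v\nabla_u-\nabla_{[u,v]}$; Ricci symmetric means the Ricci tensor is symmetric; $\tau$ is the $g$-trace of $Ric$. Gauge transformation with transition function $q>0$: $g^\sharp=q\,g$, $\nabla^{*\sharp}_vw=\nabla^*_vw+(d\ln q)(v)w+(d\ln q)(w)v$, and $\nabla^\sharp$ is the connection making $(\nabla^\sharp,g^\sharp,\nabla^{*\sharp})$ conjugate. *)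

theory Defs
  imports "HOL-Analysis.Analysis"
begin

text \<open>Local coordinate formulation on an open chart domain U in R^n (index type 'n).
  A metric is given by components g x i j = g(d_i,d_j) at x; a connection by its
  Christoffel symbols G x i j k = k-th component of nabla_{d_i} d_j at x.\<close>

definition pd :: "(real^'n \<Rightarrow> real) \<Rightarrow> 'n \<Rightarrow> real^'n \<Rightarrow> real" where
  "pd f i x = frechet_derivative f (at x) (axis i 1)"

coinductive smooth_fun_on :: "(real^'n) set \<Rightarrow> (real^'n \<Rightarrow> real) \<Rightarrow> bool" where
  "f differentiable_on U \<Longrightarrow> (\<forall>i. smooth_fun_on U (pd f i)) \<Longrightarrow> smooth_fun_on U f"

definition metric_matrix :: "(real^'n \<Rightarrow> 'n \<Rightarrow> 'n \<Rightarrow> real) \<Rightarrow> real^'n \<Rightarrow> real^'n^'n" where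
  "metric_matrix g x = (\<chi> i j. g x i j)"

definition inv_metric :: "(real^'n \<Rightarrow> 'n \<Rightarrow> 'n \<Rightarrow> real) \<Rightarrow> real^'n \<Rightarrow> real^'n^'n" where
  "inv_metric g x = matrix_inv (metric_matrix g x)"

definition pseudo_riemannian_on ::
  "(real^'n) set \<Rightarrow> (real^'n \<Rightarrow> 'n \<Rightarrow> 'n \<Rightarrow> real) \<Rightarrow> bool" where
  "pseudo_riemannian_on U g \<longleftrightarrow>
     (\<forall>i j. smooth_fun_on U (\<lambda>x. g x i j)) \<and>
     (\<forall>x\<in>U. \<forall>i j. g x i j = g x j i) \<and>
     (\<forall>x\<in>U. invertible (metric_matrix g x))"

definition connection_on ::
  "(real^'n) set \<Rightarrow> (real^'n \<Rightarrow> 'n \<Rightarrow> 'n \<Rightarrow> 'n \<Rightarrow> real) \<Rightarrow> bool" where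
  "connection_on U G \<longleftrightarrow> (\<forall>i j k. smooth_fun_on U (\<lambda>x. G x i j k))"

definition torsion_free_on ::
  "(real^'n) set \<Rightarrow> (real^'n \<Rightarrow> 'n \<Rightarrow> 'n \<Rightarrow> 'n \<Rightarrow> real) \<Rightarrow> bool" where
  "torsion_free_on U G \<longleftrightarrow> (\<forall>x\<in>U. \<forall>i j k. G x i j k = G x j i k)"

text \<open>Conjugacy u g(v,w) = g(nabla_u v,w) + g(v, nabla*_u w) on coordinate fields.\<close>
definition conjugate_on ::
  "(real^'n) set \<Rightarrow> (real^'n \<Rightarrow> 'n \<Rightarrow> 'n \<Rightarrow> 'n \<Rightarrow> real) \<Rightarrow>
   (real^'n \<Rightarrow> 'n \<Rightarrow> 'n \<Rightarrow> real) \<Rightarrow> (real^'n \<Rightarrow> 'n \<Rightarrow> 'n \<Rightarrow> 'n \<Rightarrow> real) \<Rightarrow> bool" where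
  "conjugate_on U G g Gs \<longleftrightarrow>
     (\<forall>x\<in>U. \<forall>i j k. pd (\<lambda>y. g y j k) i x =
        (\<Sum>l\<in>UNIV. G x i j l * g x l k) + (\<Sum>l\<in>UNIV. Gs x i k l * g x j l))"

text \<open>Curvature R(d_i,d_j)d_k = sum_m riemann G x i j k m d_m, with
  R(u,v) = nabla_u nabla_v - nabla_v nabla_u - nabla_[u,v].\<close>
definition riemann ::
  "(real^'n \<Rightarrow> 'n \<Rightarrow> 'n \<Rightarrow> 'n \<Rightarrow> real) \<Rightarrow> real^'n \<Rightarrow> 'n \<Rightarrow> 'n \<Rightarrow> 'n \<Rightarrow> 'n \<Rightarrow> real" where
  "riemann G x i j k m =
     pd (\<lambda>y. G y j k m) i x - pd (\<lambda>y. G y i k m) j x +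
     (\<Sum>l\<in>UNIV. G x j k l * G x i l m - G x i k l * G x j l m)"

text \<open>Ric(x,y) = Tr(z \<mapsto> R(z,x)y).\<close>
definition ricci ::
  "(real^'n \<Rightarrow> 'n \<Rightarrow> 'n \<Rightarrow> 'n \<Rightarrow> real) \<Rightarrow> real^'n \<Rightarrow> 'n \<Rightarrow> 'n \<Rightarrow> real" where
  "ricci G x j k = (\<Sum>i\<in>UNIV. riemann G x i j k i)"

definition ricci_symmetric_on ::
  "(real^'n) set \<Rightarrow> (real^'n \<Rightarrow> 'n \<Rightarrow> 'n \<Rightarrow> 'n \<Rightarrow> real) \<Rightarrow> bool" where
  "ricci_symmetric_on U G \<longleftrightarrow> (\<forall>x\<in>U. \<forall>j k. ricci G x j k = ricci G x k j)"

definition scalar_curv ::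
  "(real^'n \<Rightarrow> 'n \<Rightarrow> 'n \<Rightarrow> real) \<Rightarrow> (real^'n \<Rightarrow> 'n \<Rightarrow> 'n \<Rightarrow> 'n \<Rightarrow> real) \<Rightarrow> real^'n \<Rightarrow> real" where
  "scalar_curv g G x = (\<Sum>j\<in>UNIV. \<Sum>k\<in>UNIV. inv_metric g x $ j $ k * ricci G x j k)"

definition bform ::
  "(real^'n \<Rightarrow> 'n \<Rightarrow> 'n \<Rightarrow> real) \<Rightarrow> (real^'n \<Rightarrow> 'n \<Rightarrow> 'n \<Rightarrow> 'n \<Rightarrow> real) \<Rightarrow>
   (real^'n \<Rightarrow> 'n \<Rightarrow> 'n \<Rightarrow> 'n \<Rightarrow> real) \<Rightarrow> real^'n \<Rightarrow> 'n \<Rightarrow> 'n \<Rightarrow> real" where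
  "bform g G Gs x j k =
     (real CARD('n) - 1) * ricci G x j k + ricci Gs x j k - scalar_curv g G x * g x j k"

definition gauge_metric ::
  "(real^'n \<Rightarrow> real) \<Rightarrow> (real^'n \<Rightarrow> 'n \<Rightarrow> 'n \<Rightarrow> real) \<Rightarrow> real^'n \<Rightarrow> 'n \<Rightarrow> 'n \<Rightarrow> real" where
  "gauge_metric q g x i j = q x * g x i j"

definition gauge_dual ::
  "(real^'n \<Rightarrow> real) \<Rightarrow> (real^'n \<Rightarrow> 'n \<Rightarrow> 'n \<Rightarrow> 'n \<Rightarrow> real) \<Rightarrow> real^'n \<Rightarrow> 'n \<Rightarrow> 'n \<Rightarrow> 'n \<Rightarrow> real" where
  "gauge_dual q Gs x i j k =
     Gs x i j k + pd (\<lambda>y. ln (q y)) i x * (if k = j then 1 else 0)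
                + pd (\<lambda>y. ln (q y)) j x * (if k = i then 1 else 0)"

end

theory Submission
  imports Defs
begin

text \<open>In coordinates the gauge transformation changes \<open>\<nabla>\<^sup>*\<close> projectively by \<open>f = d ln q\<close>,
  and conjugacy with respect to \<open>q g\<close> forces \<open>\<nabla>\<^sup>\<sharp> = \<nabla> - g \<otimes> grad f\<close>. A direct computation
  gives \<open>Ric(\<nabla>\<^sup>*\<^sup>\<sharp>) = Ric\<^sup>* - (n - 1) S\<close> and \<open>Ric(\<nabla>\<^sup>\<sharp>) = Ric + S + s g\<close> for the symmetric form
  \<open>S = Hess\<^sup>*f - f \<otimes> f\<close> and a scalar \<open>s\<close>; here the total symmetry of the cubic form \<open>g((\<nabla> - \<nabla>\<^sup>*) \<cdot>, \<cdot>)\<close>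
  turns the \<open>\<nabla>\<close>-Hessian into the \<open>\<nabla>\<^sup>*\<close>-Hessian, and Schwarz's theorem makes \<open>Hess\<^sup>*f\<close> symmetric.
  Since \<open>tr\<^sub>g S = - s\<close>, the \<open>g\<^sup>\<sharp>\<close>-trace is \<open>\<tau>\<^sup>\<sharp> q = \<tau> + (n - 1) s\<close>, and all \<open>S\<close> and \<open>s\<close> terms cancel in
  \<open>(n - 1) Ric\<^sup>\<sharp> + Ric\<^sup>*\<^sup>\<sharp> - \<tau>\<^sup>\<sharp> q g\<close>.\<close>

section \<open>Partial derivatives\<close>

lemmas has_frechet_derivative_at = frechet_derivative_works[THEN iffD1]

lemma pd_eq_of_has_derivative: "(f has_derivative f') (at x) \<Longrightarrow> pd f i x = f' (axis i 1)"
  unfolding pd_def by (drule frechet_derivative_at) simp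

lemma smooth_fun_on_differentiable:
  "smooth_fun_on U f \<Longrightarrow> open U \<Longrightarrow> x \<in> U \<Longrightarrow> f differentiable at x"
  by (erule smooth_fun_on.cases) (simp add: differentiable_on_eq_differentiable_at)

lemma smooth_fun_on_pd: "smooth_fun_on U f \<Longrightarrow> smooth_fun_on U (pd f i)"
  by (erule smooth_fun_on.cases) simp

lemma pd_add:
  assumes "f differentiable at x" "g differentiable at x"
  shows "pd (\<lambda>y. f y + g y) i x = pd f i x + pd g i x"
  using pd_eq_of_has_derivative[OF has_derivative_add[OF assms[THEN has_frechet_derivative_at]]]
  by (simp add: pd_def)

lemma pd_diff:
  assumes "f differentiable at x" "g differentiable at x"
  shows "pd (\<lambda>y. f y - g y) i x = pd f i x - pd g i x"
  using pd_eq_of_has_derivative[OF has_derivative_diff[OF assms[THEN has_frechet_derivative_at]]]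
  by (simp add: pd_def)

lemma pd_mult:
  assumes "f differentiable at x" "g differentiable at x"
  shows "pd (\<lambda>y. f y * g y) i x = f x * pd g i x + pd f i x * g x"
  using pd_eq_of_has_derivative[OF has_derivative_mult[OF assms[THEN has_frechet_derivative_at]]]
  by (simp add: pd_def)

lemma pd_mult_const:
  assumes "f differentiable at x"
  shows "pd (\<lambda>y. f y * c) i x = pd f i x * c"
  using pd_eq_of_has_derivative[OF has_derivative_mult_left[OF has_frechet_derivative_at[OF assms]]]
  by (simp add: pd_def)

lemma pd_sum:
  assumes "\<And>l. f l differentiable at x"
  shows "pd (\<lambda>y. \<Sum>l\<in>(UNIV::'m::finite set). f l y) i x = (\<Sum>l\<in>UNIV. pd (f l) i x)"
proof -
  have "((\<lambda>y. \<Sum>l\<in>(UNIV::'m set). f l y) has_derivative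
         (\<lambda>h. \<Sum>l\<in>UNIV. frechet_derivative (f l) (at x) h)) (at x)"
    by (rule has_derivative_sum) (use has_frechet_derivative_at[OF assms] in auto)
  from pd_eq_of_has_derivative[OF this] show ?thesis by (simp add: pd_def)
qed

lemma pd_transform_within_open:
  assumes "open U" "x \<in> U" "\<And>y. y \<in> U \<Longrightarrow> f y = g y" "f differentiable at x"
  shows "pd f i x = pd g i x" and "g differentiable at x"
proof -
  have g: "(g has_derivative frechet_derivative f (at x)) (at x)"
    by (rule has_derivative_transform_within_open[OF has_frechet_derivative_at[OF assms(4)] assms(1,2)])
      (use assms(3) in auto)
  from pd_eq_of_has_derivative[OF g] show "pd f i x = pd g i x" by (simp add: pd_def)
  from g show "g differentiable at x" unfolding differentiable_def by blast
qed

lemma pd_ln: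
  fixes q :: "real^'n \<Rightarrow> real"
  assumes "q differentiable at x" "q x > 0"
  shows "pd (\<lambda>y. ln (q y)) i x = pd q i x / q x" and "(\<lambda>y. ln (q y)) differentiable at x"
proof -
  have "(ln has_derivative (\<lambda>h. inverse (q x) * h)) (at (q x))"
    using DERIV_ln[OF assms(2)] unfolding has_field_derivative_def by simp
  from has_derivative_compose[OF has_frechet_derivative_at[OF assms(1)] this]
  have d: "((\<lambda>y. ln (q y)) has_derivative (\<lambda>h. inverse (q x) * frechet_derivative q (at x) h)) (at x)" .
  from pd_eq_of_has_derivative[OF d] show "pd (\<lambda>y. ln (q y)) i x = pd q i x / q x"
    by (simp add: pd_def divide_inverse mult.commute)
  from d show "(\<lambda>y. ln (q y)) differentiable at x" unfolding differentiable_def by blast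
qed

lemma has_real_derivative_along_line:
  fixes f :: "real^'n \<Rightarrow> real"
  assumes "f differentiable at (c + s *\<^sub>R v)"
  shows "((\<lambda>s. f (c + s *\<^sub>R v)) has_real_derivative frechet_derivative f (at (c + s *\<^sub>R v)) v) (at s)"
proof -
  let ?D = "frechet_derivative f (at (c + s *\<^sub>R v))"
  have "((\<lambda>s. c + s *\<^sub>R v) has_derivative (\<lambda>h. h *\<^sub>R v)) (at s)"
    by (auto intro!: derivative_eq_intros)
  from has_derivative_compose[OF this has_frechet_derivative_at[OF assms]]
  have "((\<lambda>s. f (c + s *\<^sub>R v)) has_derivative (\<lambda>h. ?D (h *\<^sub>R v))) (at s)" .
  moreover have "linear ?D"
    using has_frechet_derivative_at[OF assms] has_derivative_linear by blast
  ultimately have "((\<lambda>s. f (c + s *\<^sub>R v)) has_derivative (\<lambda>h. h * ?D v)) (at s)"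
    by (simp add: linear_scale)
  then show ?thesis
    unfolding has_field_derivative_def by (rule has_derivative_eq_rhs) (auto simp: fun_eq_iff)
qed

text \<open>Mean value theorem in direction \<open>i\<close>, applied to the difference of \<open>f\<close> along two
  parallel lines, followed by the first-order expansion of \<open>pd f i\<close> at \<open>x\<close>.\<close>
lemma second_difference_approx:
  fixes f :: "real^'n \<Rightarrow> real"
  assumes U: "open U" "x \<in> U" and f: "\<forall>y\<in>U. f differentiable at y"
    and D: "(pd f i has_derivative D) (at x)" and e: "e > 0"
  shows "\<exists>d>0. \<forall>t. 0 < t \<and> t < d \<longrightarrow>
    \<bar>f (x + t *\<^sub>R axis j 1 + t *\<^sub>R axis i 1) - f (x + t *\<^sub>R axis i 1) - f (x + t *\<^sub>R axis j 1) + f x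
      - t * t * D (axis j 1)\<bar> \<le> 3 * e * t * t"
proof -
  obtain r where r: "r > 0" "ball x r \<subseteq> U" using U open_contains_ball by blast
  from D[unfolded has_derivative_at_alt] e obtain d1 where d1: "d1 > 0"
    "\<forall>y. norm (y - x) < d1 \<longrightarrow> norm (pd f i y - pd f i x - D (y - x)) \<le> e * norm (y - x)"
    and "bounded_linear D" by blast
  then have lin: "linear D" using bounded_linear.linear by blast
  let ?ei = "axis i (1::real)" and ?ej = "axis j (1::real)"
  show ?thesis
  proof (intro exI[of _ "min (r/2) (d1/2)"] conjI allI impI)
    show "0 < min (r/2) (d1/2)" using r d1 by simp
    fix t :: real assume t: "0 < t \<and> t < min (r/2) (d1/2)"
    define u where "u s = f ((x + t *\<^sub>R ?ej) + s *\<^sub>R ?ei) - f (x + s *\<^sub>R ?ei)" for s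
    define u' where "u' s = pd f i ((x + t *\<^sub>R ?ej) + s *\<^sub>R ?ei) - pd f i (x + s *\<^sub>R ?ei)" for s
    have inU: "(x + t *\<^sub>R ?ej) + s *\<^sub>R ?ei \<in> U" "x + s *\<^sub>R ?ei \<in> U" if "0 \<le> s" "s \<le> t" for s
    proof -
      have "norm (t *\<^sub>R ?ej + s *\<^sub>R ?ei) \<le> t + s"
        using norm_triangle_ineq[of "t *\<^sub>R ?ej" "s *\<^sub>R ?ei"] that t by simp
      moreover have "dist x ((x + t *\<^sub>R ?ej) + s *\<^sub>R ?ei) = norm (t *\<^sub>R ?ej + s *\<^sub>R ?ei)"
        using dist_add_cancel[of x 0 "t *\<^sub>R ?ej + s *\<^sub>R ?ei"] by (simp add: add.assoc)
      ultimately have "dist x ((x + t *\<^sub>R ?ej) + s *\<^sub>R ?ei) < r"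
        using that t by linarith
      then show "(x + t *\<^sub>R ?ej) + s *\<^sub>R ?ei \<in> U" using r by auto
      have "dist x (x + s *\<^sub>R ?ei) < r" using that t by (simp add: dist_norm)
      then show "x + s *\<^sub>R ?ei \<in> U" using r by auto
    qed
    have "DERIV u s :> u' s" if "0 \<le> s" "s \<le> t" for s
      unfolding u_def u'_def pd_def
      by (intro DERIV_diff has_real_derivative_along_line) (use f inU[OF that] in auto)
    then obtain z where z: "0 < z" "z < t" "u t - u 0 = (t - 0) * u' z"
      using MVT2[of 0 t u u'] t by auto
    define p1 where "p1 = (x + t *\<^sub>R ?ej) + z *\<^sub>R ?ei"
    define p2 where "p2 = x + z *\<^sub>R ?ei"
    have n1: "norm (p1 - x) \<le> 2 * t"
      using norm_triangle_ineq[of "t *\<^sub>R ?ej" "z *\<^sub>R ?ei"] t z by (simp add: p1_def)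
    have n2: "norm (p2 - x) \<le> t" using z by (simp add: p2_def)
    have b1: "norm (pd f i p1 - pd f i x - D (p1 - x)) \<le> e * norm (p1 - x)"
      using d1(2) n1 t by auto
    have b2: "norm (pd f i p2 - pd f i x - D (p2 - x)) \<le> e * norm (p2 - x)"
      using d1(2) n2 t z by auto
    have "D (p1 - x) - D (p2 - x) = t * D ?ej"
      using lin by (simp add: p1_def p2_def linear_add linear_scale)
    then have "u' z - t * D ?ej
        = (pd f i p1 - pd f i x - D (p1 - x)) - (pd f i p2 - pd f i x - D (p2 - x))"
      by (simp add: u'_def p1_def p2_def)
    then have "\<bar>u' z - t * D ?ej\<bar> \<le> e * norm (p1 - x) + e * norm (p2 - x)"
      using b1 b2 by (simp add: abs_diff_le_iff) linarith
    also have "\<dots> \<le> e * (2 * t) + e * t"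
      using n1 n2 e by (intro add_mono mult_left_mono) auto
    finally have bd: "\<bar>u' z - t * D ?ej\<bar> \<le> 3 * e * t" by simp
    have "u t - u 0 - t * t * D ?ej = t * (u' z - t * D ?ej)" using z by (simp add: algebra_simps)
    then have "\<bar>u t - u 0 - t * t * D ?ej\<bar> = t * \<bar>u' z - t * D ?ej\<bar>" using t by (simp add: abs_mult)
    also have "\<dots> \<le> t * (3 * e * t)" using bd t by (simp add: mult_left_mono)
    finally show "\<bar>f (x + t *\<^sub>R ?ej + t *\<^sub>R ?ei) - f (x + t *\<^sub>R ?ei) - f (x + t *\<^sub>R ?ej) + f x
      - t * t * D ?ej\<bar> \<le> 3 * e * t * t" by (simp add: u_def algebra_simps)
  qed
qed

text \<open>Schwarz's theorem: the symmetric second difference of \<open>f\<close> is approximated by both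
  mixed partials, which therefore agree.\<close>
lemma pd_commute:
  fixes f :: "real^'n \<Rightarrow> real"
  assumes U: "open U" "x \<in> U" and f: "\<forall>y\<in>U. f differentiable at y"
    and "pd f i differentiable at x" "pd f j differentiable at x"
  shows "pd (pd f i) j x = pd (pd f j) i x"
proof -
  define Di where "Di = frechet_derivative (pd f i) (at x)"
  define Dj where "Dj = frechet_derivative (pd f j) (at x)"
  have Di: "(pd f i has_derivative Di) (at x)" and Dj: "(pd f j has_derivative Dj) (at x)"
    using assms(4,5)[THEN has_frechet_derivative_at] by (simp_all add: Di_def Dj_def)
  have close: "\<bar>Di (axis j 1) - Dj (axis i 1)\<bar> \<le> 6 * e" if e: "e > 0" for e
  proof -
    obtain d1 where d1: "d1 > 0" "\<forall>t. 0 < t \<and> t < d1 \<longrightarrow>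
      \<bar>f (x + t *\<^sub>R axis j 1 + t *\<^sub>R axis i 1) - f (x + t *\<^sub>R axis i 1) - f (x + t *\<^sub>R axis j 1) + f x
      - t * t * Di (axis j 1)\<bar> \<le> 3 * e * t * t"
      using second_difference_approx[OF U f Di e, of j] by blast
    obtain d2 where d2: "d2 > 0" "\<forall>t. 0 < t \<and> t < d2 \<longrightarrow>
      \<bar>f (x + t *\<^sub>R axis i 1 + t *\<^sub>R axis j 1) - f (x + t *\<^sub>R axis j 1) - f (x + t *\<^sub>R axis i 1) + f x
      - t * t * Dj (axis i 1)\<bar> \<le> 3 * e * t * t"
      using second_difference_approx[OF U f Dj e, of i] by blast
    define t where "t = min d1 d2 / 2"
    have t: "0 < t" "t < d1" "t < d2" using d1 d2 by (auto simp: t_def)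
    have comm: "x + t *\<^sub>R axis i 1 + t *\<^sub>R axis j 1 = x + t *\<^sub>R axis j 1 + t *\<^sub>R axis i 1"
      by (simp add: algebra_simps)
    have "\<bar>t * t * Di (axis j 1) - t * t * Dj (axis i 1)\<bar> \<le> 6 * e * t * t"
      using d1(2)[rule_format, of t] d2(2)[rule_format, of t] t unfolding comm by linarith
    then have "t * t * \<bar>Di (axis j 1) - Dj (axis i 1)\<bar> \<le> t * t * (6 * e)"
      by (simp add: abs_mult right_diff_distrib[symmetric] mult_ac)
    then show ?thesis using t by (simp add: mult_le_cancel_left_pos)
  qed
  have "Di (axis j 1) = Dj (axis i 1)"
  proof (rule ccontr)
    assume "Di (axis j 1) \<noteq> Dj (axis i 1)"
    then show False using close[of "\<bar>Di (axis j 1) - Dj (axis i 1)\<bar> / 12"] by simp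
  qed
  then show ?thesis using pd_eq_of_has_derivative[OF Di] pd_eq_of_has_derivative[OF Dj] by simp
qed

section \<open>Ricci tensor in terms of Christoffel symbols\<close>

text \<open>The Ricci tensor at one point, as a function of the Christoffel symbols \<open>G\<close> and of their
  derivatives \<open>dG a i j k = \<partial>\<^sub>a G\<^sub>i\<^sub>j\<^sup>k\<close>.\<close>
definition ricci_coeffs ::
  "('n::finite \<Rightarrow> 'n \<Rightarrow> 'n \<Rightarrow> real) \<Rightarrow> ('n \<Rightarrow> 'n \<Rightarrow> 'n \<Rightarrow> 'n \<Rightarrow> real) \<Rightarrow> 'n \<Rightarrow> 'n \<Rightarrow> real" where
  "ricci_coeffs G dG j k =
     (\<Sum>i\<in>UNIV. dG i j k i - dG j i k i + (\<Sum>l\<in>UNIV. G j k l * G i l i - G i k l * G j l i))"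

lemma ricci_eq_ricci_coeffs: "ricci G x j k = ricci_coeffs (G x) (\<lambda>a i j k. pd (\<lambda>y. G y i j k) a x) j k"
  by (simp add: ricci_def riemann_def ricci_coeffs_def)

lemma ricci_coeffs_add:
  "ricci_coeffs (\<lambda>i j k. G i j k + A i j k) (\<lambda>a i j k. dG a i j k + dA a i j k) j k =
   ricci_coeffs G dG j k + (\<Sum>i\<in>UNIV. dA i j k i - dA j i k i) +
   ((\<Sum>i\<in>UNIV. \<Sum>l\<in>UNIV. G j k l * A i l i) + (\<Sum>i\<in>UNIV. \<Sum>l\<in>UNIV. A j k l * G i l i)
   + (\<Sum>i\<in>UNIV. \<Sum>l\<in>UNIV. A j k l * A i l i) - (\<Sum>i\<in>UNIV. \<Sum>l\<in>UNIV. G i k l * A j l i)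
   - (\<Sum>i\<in>UNIV. \<Sum>l\<in>UNIV. A i k l * G j l i) - (\<Sum>i\<in>UNIV. \<Sum>l\<in>UNIV. A i k l * A j l i))"
proof -
  have "ricci_coeffs (\<lambda>i j k. G i j k + A i j k) (\<lambda>a i j k. dG a i j k + dA a i j k) j k =
    (\<Sum>i\<in>UNIV. (dG i j k i - dG j i k i + (\<Sum>l\<in>UNIV. G j k l * G i l i - G i k l * G j l i))
     + (dA i j k i - dA j i k i) + (\<Sum>l\<in>UNIV. G j k l * A i l i + A j k l * G i l i + A j k l * A i l i
        - G i k l * A j l i - A i k l * G j l i - A i k l * A j l i))"
    unfolding ricci_coeffs_def
    by (rule sum.cong) (auto simp: sum.distrib[symmetric] algebra_simps intro!: sum.cong)
  then show ?thesis unfolding ricci_coeffs_def by (simp add: sum.distrib sum_subtractf)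
qed

lemma mult_if_zero_right: "c * (if P then a else 0) = (if P then c * a else (0::real))"
  by simp

lemma mult_if_zero_left: "(if P then a else 0) * c = (if P then a * c else (0::real))"
  by simp

lemma sum_if_zero: "(\<Sum>l\<in>S. if P then F l else 0) = (if P then (\<Sum>l\<in>S. F l) else (0::real))"
  by simp

lemmas kronecker_simps = sum_if_zero mult_if_zero_right mult_if_zero_left distrib_left distrib_right
  sum.distrib sum_subtractf left_diff_distrib right_diff_distrib

text \<open>The projective change \<open>\<nabla>\<^sub>u v + df(u) v + df(v) u\<close> in coordinates.\<close>
definition projective_term :: "('n \<Rightarrow> real) \<Rightarrow> 'n \<Rightarrow> 'n \<Rightarrow> 'n \<Rightarrow> real" where
  "projective_term f i j k = f i * (if k = j then 1 else 0) + f j * (if k = i then 1 else 0)"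

lemma ricci_coeffs_projective_change:
  fixes Gs :: "'n::finite \<Rightarrow> 'n \<Rightarrow> 'n \<Rightarrow> real"
  assumes Gs_sym: "\<And>i j k. Gs i j k = Gs j i k" and df_sym: "\<And>a b. df a b = df b a"
  shows "ricci_coeffs (\<lambda>i j k. Gs i j k + projective_term f i j k)
           (\<lambda>a i j k. dGs a i j k + projective_term (df a) i j k) j k
       = ricci_coeffs Gs dGs j k - (real CARD('n) - 1) * (df j k - (\<Sum>l\<in>UNIV. Gs j k l * f l) - f j * f k)"
proof -
  let ?A = "projective_term f" and ?n = "real CARD('n)"
  have X1: "(\<Sum>i\<in>UNIV. \<Sum>l\<in>UNIV. Gs j k l * ?A i l i) = (?n + 1) * (\<Sum>l\<in>UNIV. Gs j k l * f l)"
    unfolding projective_term_def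
    by (simp add: kronecker_simps sum_distrib_left[symmetric] cong: if_cong)
  have X2: "(\<Sum>i\<in>UNIV. \<Sum>l\<in>UNIV. ?A j k l * Gs i l i) = (\<Sum>i\<in>UNIV. f j * Gs i k i + f k * Gs i j i)"
    unfolding projective_term_def by (simp add: kronecker_simps cong: if_cong)
  have X3: "(\<Sum>i\<in>UNIV. \<Sum>l\<in>UNIV. ?A j k l * ?A i l i) = 2 * (?n + 1) * f j * f k"
    unfolding projective_term_def by (simp add: kronecker_simps cong: if_cong)
  have X4: "(\<Sum>i\<in>UNIV. \<Sum>l\<in>UNIV. Gs i k l * ?A j l i) = (\<Sum>i\<in>UNIV. Gs i k i * f j + Gs j k i * f i)"
    unfolding projective_term_def by (simp add: kronecker_simps cong: if_cong)
  have X5: "(\<Sum>i\<in>UNIV. \<Sum>l\<in>UNIV. ?A i k l * Gs j l i) = (\<Sum>i\<in>UNIV. f i * Gs j k i + f k * Gs j i i)"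
    unfolding projective_term_def by (simp add: kronecker_simps cong: if_cong)
  have X6: "(\<Sum>i\<in>UNIV. \<Sum>l\<in>UNIV. ?A i k l * ?A j l i) = (?n + 3) * f j * f k"
    unfolding projective_term_def by (simp add: kronecker_simps cong: if_cong)
  have Xd: "(\<Sum>i\<in>UNIV. projective_term (df i) j k i - projective_term (df j) i k i) = df k j - ?n * df j k"
    unfolding projective_term_def by (simp add: kronecker_simps cong: if_cong)
  have t: "(\<Sum>i\<in>UNIV. f j * Gs i k i + f k * Gs i j i) - (\<Sum>i\<in>UNIV. Gs i k i * f j + Gs j k i * f i)
     - (\<Sum>i\<in>UNIV. f i * Gs j k i + f k * Gs j i i) = - 2 * (\<Sum>l\<in>UNIV. Gs j k l * f l)"
    by (simp add: sum.distrib sum_subtractf Gs_sym[of _ j] algebra_simps sum_distrib_left[symmetric])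
  show ?thesis
    unfolding ricci_coeffs_add X1 X2 X3 X4 X5 X6 Xd
    using t df_sym[of k j] by (simp add: algebra_simps)
qed


section \<open>The gauge transformation at one point\<close>

definition raise_index :: "('n::finite \<Rightarrow> 'n \<Rightarrow> real) \<Rightarrow> ('n \<Rightarrow> real) \<Rightarrow> 'n \<Rightarrow> real" where
  "raise_index Gi f m = (\<Sum>k\<in>UNIV. Gi m k * f k)"

locale symmetric_inverse =
  fixes g Gi :: "'n::finite \<Rightarrow> 'n \<Rightarrow> real"
  assumes sym: "g i j = g j i"
    and right_inverse: "(\<Sum>k\<in>UNIV. g i k * Gi k j) = (if i = j then 1 else 0)"
    and left_inverse: "(\<Sum>k\<in>UNIV. Gi i k * g k j) = (if i = j then 1 else 0)"
begin

lemma lower_raise_index: "(\<Sum>i\<in>UNIV. g a i * raise_index Gi X i) = X a"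
proof -
  have "(\<Sum>i\<in>UNIV. g a i * raise_index Gi X i) = (\<Sum>i\<in>UNIV. \<Sum>m\<in>UNIV. g a i * Gi i m * X m)"
    by (simp add: raise_index_def sum_distrib_left mult.assoc)
  also have "\<dots> = (\<Sum>m\<in>UNIV. (\<Sum>i\<in>UNIV. g a i * Gi i m) * X m)"
    by (subst sum.swap) (simp add: sum_distrib_right)
  also have "\<dots> = X a" by (simp add: right_inverse mult_if_zero_left)
  finally show ?thesis .
qed

lemma lower_raise_index': "(\<Sum>i\<in>UNIV. raise_index Gi X i * g i a) = X a"
  using lower_raise_index[of a X] by (simp add: sym[of _ a] mult.commute)

lemma raise_lower_index: "raise_index Gi (\<lambda>k. \<Sum>m\<in>UNIV. Z m * g m k) a = Z a"
proof -
  have "raise_index Gi (\<lambda>k. \<Sum>m\<in>UNIV. Z m * g m k) a = (\<Sum>k\<in>UNIV. \<Sum>m\<in>UNIV. Gi a k * g k m * Z m)"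
    by (simp add: raise_index_def sum_distrib_left sym mult_ac)
  also have "\<dots> = (\<Sum>m\<in>UNIV. (\<Sum>k\<in>UNIV. Gi a k * g k m) * Z m)"
    by (subst sum.swap) (simp add: sum_distrib_right)
  also have "\<dots> = Z a" by (simp add: left_inverse mult_if_zero_left)
  finally show ?thesis .
qed

lemma inverse_sym: "Gi a b = Gi b a"
proof -
  have col: "(\<Sum>k\<in>UNIV. Gi k a * g k c) = (if c = a then 1 else 0)" for c
    using right_inverse[of c a] by (simp add: sym[of _ c] mult.commute)
  have "Gi a b = (\<Sum>c\<in>UNIV. (if c = a then 1 else 0) * Gi c b)"
    by (simp add: mult_if_zero_left)
  also have "\<dots> = (\<Sum>c\<in>UNIV. (\<Sum>k\<in>UNIV. Gi k a * g k c) * Gi c b)"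
    by (simp only: col)
  also have "\<dots> = (\<Sum>k\<in>UNIV. Gi k a * (\<Sum>c\<in>UNIV. g k c * Gi c b))"
    by (simp add: sum_distrib_right sum_distrib_left mult.assoc) (rule sum.swap)
  also have "\<dots> = Gi b a" by (simp add: right_inverse mult_if_zero_right)
  finally show ?thesis .
qed

lemma solve_lowered:
  assumes "\<And>k. (\<Sum>l\<in>UNIV. X l * g l k) = Y k"
  shows "X m = raise_index Gi Y m"
  using raise_lower_index[of X m] assms by simp

lemma trace_metric: "(\<Sum>a\<in>UNIV. \<Sum>b\<in>UNIV. Gi a b * g a b) = real CARD('n)"
proof -
  have "(\<Sum>b\<in>UNIV. Gi a b * g a b) = 1" for a
    using left_inverse[of a a] by (simp add: sym[of a])
  then show ?thesis by simp
qed

lemma contract_raise_index: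
  "(\<Sum>a\<in>UNIV. \<Sum>b\<in>UNIV. Gi a b * (f a * f b)) = (\<Sum>l\<in>UNIV. raise_index Gi f l * f l)"
proof -
  have "(\<Sum>a\<in>UNIV. \<Sum>b\<in>UNIV. Gi a b * (f a * f b)) = (\<Sum>b\<in>UNIV. \<Sum>a\<in>UNIV. Gi a b * (f a * f b))"
    by (rule sum.swap)
  also have "\<dots> = (\<Sum>b\<in>UNIV. raise_index Gi f b * f b)"
  proof (rule sum.cong[OF refl])
    fix b
    show "(\<Sum>a\<in>UNIV. Gi a b * (f a * f b)) = raise_index Gi f b * f b"
      unfolding raise_index_def sum_distrib_right by (rule sum.cong[OF refl]) (simp add: inverse_sym[of _ b])
  qed
  finally show ?thesis .
qed

end

text \<open>Coordinates at one point: a metric \<open>g\<close> with inverse \<open>Gi\<close> and derivative \<open>dg\<close>, the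
  Christoffel symbols \<open>G\<close>, \<open>Gs\<close> of a conjugate pair of torsion free connections,
  \<open>f = d ln q\<close> with derivative \<open>df\<close>, and \<open>dP\<close>, the derivative of the gradient
  \<open>raise_index Gi f\<close> (using \<open>\<partial>Gi = - Gi (\<partial>g) Gi\<close>).\<close>
locale gauge_coeffs = symmetric_inverse g Gi
  for g Gi :: "'n::finite \<Rightarrow> 'n \<Rightarrow> real" +
  fixes dg G Gs :: "'n \<Rightarrow> 'n \<Rightarrow> 'n \<Rightarrow> real" and f :: "'n \<Rightarrow> real" and df dP :: "'n \<Rightarrow> 'n \<Rightarrow> real"
  assumes dg_sym: "dg a i j = dg a j i"
    and dg_conj: "dg a b c = (\<Sum>l\<in>UNIV. G a b l * g l c) + (\<Sum>l\<in>UNIV. Gs a c l * g b l)"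
    and G_sym: "G i j k = G j i k" and Gs_sym: "Gs i j k = Gs j i k"
    and df_sym: "df a b = df b a"
    and dP_def: "dP a m = raise_index Gi (\<lambda>k. df a k - (\<Sum>l\<in>UNIV. raise_index Gi f l * dg a l k)) m"
begin

abbreviation grad :: "'n \<Rightarrow> real" where
  "grad \<equiv> raise_index Gi f"

definition cubic :: "'n \<Rightarrow> 'n \<Rightarrow> 'n \<Rightarrow> real" where
  "cubic a b c = (\<Sum>l\<in>UNIV. (G a b l - Gs a b l) * g l c)"

definition ricci_shift :: "'n \<Rightarrow> 'n \<Rightarrow> real" where
  "ricci_shift j k = df j k - (\<Sum>l\<in>UNIV. Gs j k l * f l) - f j * f k"

definition gauge_scalar :: real where
  "gauge_scalar = (\<Sum>l\<in>UNIV. grad l * f l) - (\<Sum>i\<in>UNIV. dP i i) - (\<Sum>l\<in>UNIV. grad l * (\<Sum>i\<in>UNIV. G i l i))"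

lemma cubic_swap12: "cubic a b c = cubic b a c"
  unfolding cubic_def by (simp add: G_sym[of a] Gs_sym[of a])

lemma cubic_swap23: "cubic a b c = cubic a c b"
proof -
  have "(\<Sum>l\<in>UNIV. G a b l * g l c) + (\<Sum>l\<in>UNIV. Gs a c l * g l b)
      = (\<Sum>l\<in>UNIV. G a c l * g l b) + (\<Sum>l\<in>UNIV. Gs a b l * g l c)"
    using dg_sym[of a b c] unfolding dg_conj by (simp add: sym[of b] sym[of c])
  then show ?thesis unfolding cubic_def by (simp add: left_diff_distrib sum_subtractf)
qed

lemma cubic_contract_grad:
  "(\<Sum>i\<in>UNIV. grad i * cubic i k j) = (\<Sum>l\<in>UNIV. G j k l * f l) - (\<Sum>l\<in>UNIV. Gs j k l * f l)"
proof -
  have "cubic i k j = cubic j k i" for i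
    by (metis cubic_swap12 cubic_swap23)
  then have "(\<Sum>i\<in>UNIV. grad i * cubic i k j) = (\<Sum>i\<in>UNIV. \<Sum>l\<in>UNIV. grad i * ((G j k l - Gs j k l) * g l i))"
    by (simp add: cubic_def sum_distrib_left)
  also have "\<dots> = (\<Sum>l\<in>UNIV. (G j k l - Gs j k l) * (\<Sum>i\<in>UNIV. g l i * grad i))"
    by (subst sum.swap) (simp add: sum_distrib_left mult_ac)
  also have "\<dots> = (\<Sum>l\<in>UNIV. (G j k l - Gs j k l) * f l)"
    by (simp add: lower_raise_index)
  finally show ?thesis by (simp add: left_diff_distrib sum_subtractf)
qed

lemma sharp_deriv_contraction:
  "(\<Sum>i\<in>UNIV. (- dg i j k * grad i - g j k * dP i i) - (- dg j i k * grad i - g i k * dP j i))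
   = df j k - (\<Sum>i\<in>UNIV. grad i * (\<Sum>l\<in>UNIV. G i j l * g l k))
     - (\<Sum>i\<in>UNIV. grad i * (\<Sum>l\<in>UNIV. Gs i k l * g j l)) - g j k * (\<Sum>i\<in>UNIV. dP i i)"
proof -
  have gdP: "(\<Sum>i\<in>UNIV. g i k * dP j i) = df j k - (\<Sum>l\<in>UNIV. grad l * dg j l k)"
    using lower_raise_index[of k "\<lambda>m. df j m - (\<Sum>l\<in>UNIV. grad l * dg j l m)"]
    by (simp add: sym dP_def)
  have "(\<Sum>i\<in>UNIV. (- dg i j k * grad i - g j k * dP i i) - (- dg j i k * grad i - g i k * dP j i))
      = - (\<Sum>i\<in>UNIV. dg i j k * grad i) - g j k * (\<Sum>i\<in>UNIV. dP i i) + (\<Sum>i\<in>UNIV. dg j i k * grad i)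
        + (\<Sum>i\<in>UNIV. g i k * dP j i)"
    by (simp add: sum.distrib sum_subtractf sum_negf sum_distrib_left)
  also have "\<dots> = df j k - (\<Sum>i\<in>UNIV. dg i j k * grad i) - g j k * (\<Sum>i\<in>UNIV. dP i i)"
    unfolding gdP by (simp add: mult.commute)
  also have "(\<Sum>i\<in>UNIV. dg i j k * grad i) = (\<Sum>i\<in>UNIV. grad i * (\<Sum>l\<in>UNIV. G i j l * g l k))
      + (\<Sum>i\<in>UNIV. grad i * (\<Sum>l\<in>UNIV. Gs i k l * g j l))"
    unfolding dg_conj by (simp add: sum.distrib algebra_simps)
  finally show ?thesis by simp
qed

lemma ricci_coeffs_sharp_expanded:
  "ricci_coeffs (\<lambda>i j k. G i j k + (- g i j * grad k))
     (\<lambda>a i j k. dG a i j k + (- dg a i j * grad k - g i j * dP a k)) j k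
   = ricci_coeffs G dG j k + (df j k - (\<Sum>l\<in>UNIV. G j k l * f l) - f j * f k
       + (\<Sum>i\<in>UNIV. grad i * (\<Sum>l\<in>UNIV. (G i k l - Gs i k l) * g j l)))
     + g j k * gauge_scalar"
proof -
  have Y1: "(\<Sum>i\<in>UNIV. \<Sum>l\<in>UNIV. G j k l * (- g i l * grad i)) = - (\<Sum>l\<in>UNIV. G j k l * f l)"
  proof -
    have "(\<Sum>i\<in>UNIV. \<Sum>l\<in>UNIV. G j k l * (- g i l * grad i))
        = (\<Sum>l\<in>UNIV. - (G j k l * (\<Sum>i\<in>UNIV. grad i * g i l)))"
      by (subst sum.swap) (simp add: sum_distrib_left sum_negf mult_ac)
    then show ?thesis by (simp add: lower_raise_index' sum_negf)
  qed
  have Y2: "(\<Sum>i\<in>UNIV. \<Sum>l\<in>UNIV. (- g j k * grad l) * G i l i)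
      = - g j k * (\<Sum>l\<in>UNIV. grad l * (\<Sum>i\<in>UNIV. G i l i))"
    by (subst sum.swap) (simp add: sum_distrib_left mult.assoc)
  have Y3: "(\<Sum>i\<in>UNIV. \<Sum>l\<in>UNIV. (- g j k * grad l) * (- g i l * grad i)) = g j k * (\<Sum>l\<in>UNIV. grad l * f l)"
  proof -
    have "(\<Sum>i\<in>UNIV. \<Sum>l\<in>UNIV. (- g j k * grad l) * (- g i l * grad i))
        = (\<Sum>l\<in>UNIV. g j k * grad l * (\<Sum>i\<in>UNIV. grad i * g i l))"
      by (subst sum.swap) (simp add: sum_distrib_left mult_ac)
    also have "\<dots> = (\<Sum>l\<in>UNIV. g j k * grad l * f l)"
      by (simp only: lower_raise_index')
    finally show ?thesis by (simp add: sum_distrib_left mult.assoc)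
  qed
  have Y4: "(\<Sum>i\<in>UNIV. \<Sum>l\<in>UNIV. G i k l * (- g j l * grad i))
      = - (\<Sum>i\<in>UNIV. grad i * (\<Sum>l\<in>UNIV. G i k l * g j l))"
    by (simp add: sum_distrib_left sum_negf mult_ac)
  have Y5: "(\<Sum>i\<in>UNIV. \<Sum>l\<in>UNIV. (- g i k * grad l) * G j l i)
      = - (\<Sum>i\<in>UNIV. grad i * (\<Sum>l\<in>UNIV. G i j l * g l k))"
    by (subst sum.swap) (simp add: G_sym[of j] sum_distrib_left sum_negf mult_ac)
  have Y6: "(\<Sum>i\<in>UNIV. \<Sum>l\<in>UNIV. (- g i k * grad l) * (- g j l * grad i)) = f k * f j"
  proof -
    have "(\<Sum>i\<in>UNIV. \<Sum>l\<in>UNIV. (- g i k * grad l) * (- g j l * grad i))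
        = (\<Sum>i\<in>UNIV. grad i * g i k * (\<Sum>l\<in>UNIV. grad l * g l j))"
      by (simp add: sum_distrib_left mult_ac sym[of j])
    then show ?thesis by (simp add: lower_raise_index' sum_distrib_right[symmetric])
  qed
  show ?thesis
    unfolding ricci_coeffs_add sharp_deriv_contraction Y1 Y2 Y3 Y4 Y5 Y6 gauge_scalar_def
    by (simp add: algebra_simps sum_subtractf sum.distrib)
qed

lemma ricci_coeffs_sharp:
  "ricci_coeffs (\<lambda>i j k. G i j k - g i j * grad k)
     (\<lambda>a i j k. dG a i j k - dg a i j * grad k - g i j * dP a k) j k
   = ricci_coeffs G dG j k + ricci_shift j k + g j k * gauge_scalar"
proof -
  have "(\<lambda>i j k. G i j k - g i j * grad k) = (\<lambda>i j k. G i j k + (- g i j * grad k))"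
    and "(\<lambda>a i j k. dG a i j k - dg a i j * grad k - g i j * dP a k)
       = (\<lambda>a i j k. dG a i j k + (- dg a i j * grad k - g i j * dP a k))"
    by (simp_all add: fun_eq_iff)
  moreover have "(\<Sum>i\<in>UNIV. grad i * (\<Sum>l\<in>UNIV. (G i k l - Gs i k l) * g j l))
      = (\<Sum>l\<in>UNIV. G j k l * f l) - (\<Sum>l\<in>UNIV. Gs j k l * f l)"
    unfolding cubic_contract_grad[symmetric] by (simp add: cubic_def sym[of j])
  ultimately show ?thesis
    unfolding ricci_shift_def by (simp only: ricci_coeffs_sharp_expanded)
qed

lemma trace_grad_deriv:
  "(\<Sum>i\<in>UNIV. dP i i) = (\<Sum>a\<in>UNIV. \<Sum>b\<in>UNIV. Gi a b * df a b) - (\<Sum>l\<in>UNIV. grad l * (\<Sum>i\<in>UNIV. G i l i))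
     - (\<Sum>a\<in>UNIV. \<Sum>b\<in>UNIV. Gi a b * (\<Sum>m\<in>UNIV. Gs a b m * f m))"
proof -
  have G_part: "(\<Sum>l\<in>UNIV. grad l * (\<Sum>m\<in>UNIV. G i l m * g m k))
      = (\<Sum>m\<in>UNIV. (\<Sum>l\<in>UNIV. grad l * G i l m) * g m k)" for i k
    by (simp add: sum_distrib_left sum_distrib_right mult_ac) (rule sum.swap)
  have Gs_part: "(\<Sum>l\<in>UNIV. grad l * (\<Sum>m\<in>UNIV. Gs i k m * g l m)) = (\<Sum>m\<in>UNIV. Gs i k m * f m)" for i k
  proof -
    have "(\<Sum>l\<in>UNIV. grad l * (\<Sum>m\<in>UNIV. Gs i k m * g l m))
        = (\<Sum>m\<in>UNIV. Gs i k m * (\<Sum>l\<in>UNIV. grad l * g l m))"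
      by (simp add: sum_distrib_left mult_ac) (rule sum.swap)
    then show ?thesis by (simp add: lower_raise_index')
  qed
  have "raise_index Gi (\<lambda>k. \<Sum>l\<in>UNIV. grad l * dg i l k) i
      = (\<Sum>l\<in>UNIV. grad l * G i l i) + (\<Sum>k\<in>UNIV. Gi i k * (\<Sum>m\<in>UNIV. Gs i k m * f m))" for i
    unfolding dg_conj distrib_left sum.distrib G_part Gs_part
    by (simp add: raise_index_def distrib_left sum.distrib raise_lower_index[unfolded raise_index_def])
  then have "(\<Sum>i\<in>UNIV. dP i i) = (\<Sum>i\<in>UNIV. (\<Sum>k\<in>UNIV. Gi i k * df i k)
      - ((\<Sum>l\<in>UNIV. grad l * G i l i) + (\<Sum>k\<in>UNIV. Gi i k * (\<Sum>m\<in>UNIV. Gs i k m * f m))))"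
    by (simp add: dP_def raise_index_def right_diff_distrib sum_subtractf)
  moreover have "(\<Sum>i\<in>UNIV. \<Sum>l\<in>UNIV. grad l * G i l i) = (\<Sum>l\<in>UNIV. grad l * (\<Sum>i\<in>UNIV. G i l i))"
    by (subst sum.swap) (simp add: sum_distrib_left)
  ultimately show ?thesis by (simp add: sum_subtractf sum.distrib)
qed

lemma trace_ricci_shift: "(\<Sum>a\<in>UNIV. \<Sum>b\<in>UNIV. Gi a b * ricci_shift a b) = - gauge_scalar"
  unfolding ricci_shift_def gauge_scalar_def trace_grad_deriv contract_raise_index[symmetric]
  by (simp add: right_diff_distrib sum_subtractf)

lemma bform_coeffs_gauge_invariant:
  fixes dG dGs :: "'n \<Rightarrow> 'n \<Rightarrow> 'n \<Rightarrow> 'n \<Rightarrow> real"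
  defines "R_sharp \<equiv> ricci_coeffs (\<lambda>i j k. G i j k - g i j * grad k)
      (\<lambda>a i j k. dG a i j k - dg a i j * grad k - g i j * dP a k)"
    and "Rs_sharp \<equiv> ricci_coeffs (\<lambda>i j k. Gs i j k + projective_term f i j k)
      (\<lambda>a i j k. dGs a i j k + projective_term (df a) i j k)"
  shows "(real CARD('n) - 1) * R_sharp j k + Rs_sharp j k - (\<Sum>a\<in>UNIV. \<Sum>b\<in>UNIV. Gi a b * R_sharp a b) * g j k
       = (real CARD('n) - 1) * ricci_coeffs G dG j k + ricci_coeffs Gs dGs j k
         - (\<Sum>a\<in>UNIV. \<Sum>b\<in>UNIV. Gi a b * ricci_coeffs G dG a b) * g j k"
proof -
  have R: "R_sharp a b = ricci_coeffs G dG a b + ricci_shift a b + g a b * gauge_scalar" for a b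
    unfolding R_sharp_def by (rule ricci_coeffs_sharp)
  have Rs: "Rs_sharp j k = ricci_coeffs Gs dGs j k - (real CARD('n) - 1) * ricci_shift j k"
    unfolding Rs_sharp_def ricci_shift_def by (rule ricci_coeffs_projective_change[OF Gs_sym df_sym])
  have "(\<Sum>a\<in>UNIV. \<Sum>b\<in>UNIV. Gi a b * R_sharp a b) = (\<Sum>a\<in>UNIV. \<Sum>b\<in>UNIV. Gi a b * ricci_coeffs G dG a b)
      + (\<Sum>a\<in>UNIV. \<Sum>b\<in>UNIV. Gi a b * ricci_shift a b) + gauge_scalar * (\<Sum>a\<in>UNIV. \<Sum>b\<in>UNIV. Gi a b * g a b)"
    unfolding R by (simp add: distrib_left sum.distrib sum_distrib_left mult_ac)
  then have trace: "(\<Sum>a\<in>UNIV. \<Sum>b\<in>UNIV. Gi a b * R_sharp a b)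
      = (\<Sum>a\<in>UNIV. \<Sum>b\<in>UNIV. Gi a b * ricci_coeffs G dG a b) + (real CARD('n) - 1) * gauge_scalar"
    by (simp add: trace_ricci_shift trace_metric algebra_simps)
  show ?thesis unfolding trace Rs R[of j k] by (simp add: algebra_simps)
qed

end

section \<open>The gauge transformation on a chart\<close>

lemma invertible_matrix_inv:
  "invertible (A::'a::semiring_1^'n^'n) \<Longrightarrow> A ** matrix_inv A = mat 1 \<and> matrix_inv A ** A = mat 1"
  unfolding invertible_def matrix_inv_def by (rule someI_ex)

lemma matrix_inv_scaleR:
  fixes A :: "real^'n^'n"
  assumes "invertible A" "c \<noteq> 0"
  shows "matrix_inv (c *\<^sub>R A) = (1 / c) *\<^sub>R matrix_inv A"
proof -
  let ?B = "matrix_inv (c *\<^sub>R A)"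
  have "invertible (c *\<^sub>R A)" using scalar_invertible assms by blast
  then have B: "?B ** (c *\<^sub>R A) = mat 1" using invertible_matrix_inv by blast
  have "A ** matrix_inv A = mat 1" using invertible_matrix_inv assms(1) by blast
  then have cA: "(c *\<^sub>R A) ** ((1 / c) *\<^sub>R matrix_inv A) = mat 1"
    using assms(2) by (simp add: matrix_scalar_ac vec_eq_iff matrix_matrix_mult_def sum_distrib_left mult_ac)
  have "?B = ?B ** ((c *\<^sub>R A) ** ((1 / c) *\<^sub>R matrix_inv A))" by (simp add: cA)
  also have "\<dots> = (1 / c) *\<^sub>R matrix_inv A" by (simp add: matrix_mul_assoc B)
  finally show ?thesis .
qed

locale gauge_transformation =
  fixes U :: "(real^'n) set" and g :: "real^'n \<Rightarrow> 'n \<Rightarrow> 'n \<Rightarrow> real"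
    and G Gs Gsh :: "real^'n \<Rightarrow> 'n \<Rightarrow> 'n \<Rightarrow> 'n \<Rightarrow> real" and q :: "real^'n \<Rightarrow> real"
  assumes open_U: "open U"
    and metric: "pseudo_riemannian_on U g"
    and connection_G: "connection_on U G" and connection_Gs: "connection_on U Gs"
    and torsion_free_G: "torsion_free_on U G" and torsion_free_Gs: "torsion_free_on U Gs"
    and conjugate: "conjugate_on U G g Gs"
    and smooth_q: "smooth_fun_on U q" and q_pos: "\<forall>x\<in>U. q x > 0"
    and connection_Gsh: "connection_on U Gsh"
    and conjugate_sharp: "conjugate_on U Gsh (gauge_metric q g) (gauge_dual q Gs)"
begin

definition Gi :: "real^'n \<Rightarrow> 'n \<Rightarrow> 'n \<Rightarrow> real" where
  "Gi x a b = inv_metric g x $ a $ b"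

definition dg :: "real^'n \<Rightarrow> 'n \<Rightarrow> 'n \<Rightarrow> 'n \<Rightarrow> real" where
  "dg x a b c = pd (\<lambda>y. g y b c) a x"

definition dlog :: "real^'n \<Rightarrow> 'n \<Rightarrow> real" where
  "dlog x k = pd (\<lambda>y. ln (q y)) k x"

definition ddlog :: "real^'n \<Rightarrow> 'n \<Rightarrow> 'n \<Rightarrow> real" where
  "ddlog x a b = pd (\<lambda>y. dlog y b) a x"

definition dP :: "real^'n \<Rightarrow> 'n \<Rightarrow> 'n \<Rightarrow> real" where
  "dP x a m = raise_index (Gi x) (\<lambda>k. ddlog x a k - (\<Sum>l\<in>UNIV. raise_index (Gi x) (dlog x) l * dg x a l k)) m"

lemma differentiable_coeffs:
  assumes "x \<in> U"
  shows "q differentiable at x" and "(\<lambda>y. g y i j) differentiable at x"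
    and "(\<lambda>y. G y i j k) differentiable at x" and "(\<lambda>y. Gs y i j k) differentiable at x"
    and "(\<lambda>y. Gsh y i j k) differentiable at x"
  using smooth_q metric connection_G connection_Gs connection_Gsh
  unfolding pseudo_riemannian_on_def connection_on_def
  by (auto intro: smooth_fun_on_differentiable[OF _ open_U assms])

lemma metric_sym: "x \<in> U \<Longrightarrow> g x i j = g x j i"
  using metric unfolding pseudo_riemannian_on_def by blast

lemma dlog_eq: "x \<in> U \<Longrightarrow> dlog x i = pd q i x / q x"
  unfolding dlog_def using pd_ln(1) differentiable_coeffs(1) q_pos by blast

lemma dlog_differentiable:
  assumes x: "x \<in> U"
  shows "(\<lambda>y. dlog y i) differentiable at x"
proof -
  have "(\<lambda>y. pd q i y / q y) differentiable at x"
    using smooth_fun_on_differentiable[OF smooth_fun_on_pd[OF smooth_q] open_U x]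
      differentiable_coeffs(1)[OF x] q_pos x
    by (intro differentiable_divide) auto
  then show ?thesis
    using pd_transform_within_open(2)[OF open_U x, of "\<lambda>y. pd q i y / q y"] dlog_eq by auto
qed

lemma ddlog_sym: "x \<in> U \<Longrightarrow> ddlog x a b = ddlog x b a"
  using pd_commute[OF open_U _ _ dlog_differentiable[unfolded dlog_def] dlog_differentiable[unfolded dlog_def]]
    pd_ln(2)[OF differentiable_coeffs(1)] q_pos
  unfolding ddlog_def dlog_def by (metis eta_contract_eq)

text \<open>The conjugacy of \<open>\<nabla>\<^sup>\<sharp>\<close> and \<open>\<nabla>\<^sup>*\<^sup>\<sharp>\<close> with respect to \<open>q g\<close>, after the terms coming
  from \<open>dq = q d ln q\<close> have been cancelled against \<open>\<nabla>\<^sup>*\<^sup>\<sharp> - \<nabla>\<^sup>*\<close>.\<close>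
lemma gauge_conj_lowered:
  assumes y: "y \<in> U"
  shows "(\<Sum>l\<in>UNIV. Gsh y i j l * g y l k) = (\<Sum>l\<in>UNIV. G y i j l * g y l k) - dlog y k * g y i j"
proof -
  have qy: "q y > 0" using q_pos y by blast
  have "pd q i y = q y * dlog y i" using dlog_eq[OF y, of i] qy by simp
  then have lhs: "pd (\<lambda>z. gauge_metric q g z j k) i y
      = q y * ((\<Sum>l\<in>UNIV. G y i j l * g y l k) + (\<Sum>l\<in>UNIV. Gs y i k l * g y j l)) + q y * dlog y i * g y j k"
    using conjugate y unfolding gauge_metric_def conjugate_on_def
    by (simp add: pd_mult[OF differentiable_coeffs(1,2)[OF y]])
  have rhs: "(\<Sum>l\<in>UNIV. Gsh y i j l * gauge_metric q g y l k)
        + (\<Sum>l\<in>UNIV. gauge_dual q Gs y i k l * gauge_metric q g y j l)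
      = q y * (\<Sum>l\<in>UNIV. Gsh y i j l * g y l k)
        + q y * ((\<Sum>l\<in>UNIV. Gs y i k l * g y j l) + dlog y i * g y j k + dlog y k * g y j i)"
    unfolding gauge_metric_def gauge_dual_def dlog_def
    by (simp add: distrib_left distrib_right sum.distrib sum_distrib_left mult_if_zero_right
        mult_if_zero_left mult_ac)
  have "q y * (\<Sum>l\<in>UNIV. Gsh y i j l * g y l k)
      = q y * ((\<Sum>l\<in>UNIV. G y i j l * g y l k) - dlog y k * g y i j)"
    using conjugate_sharp y lhs rhs metric_sym[OF y, of j i]
    unfolding conjugate_on_def by (simp add: algebra_simps)
  then show ?thesis using qy by simp
qed

lemma gauge_coeffs_at:
  assumes x: "x \<in> U"
  shows "gauge_coeffs (g x) (Gi x) (dg x) (G x) (Gs x) (dlog x) (ddlog x) (dP x)"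
proof unfold_locales
  have inv: "metric_matrix g x ** matrix_inv (metric_matrix g x) = mat 1"
    "matrix_inv (metric_matrix g x) ** metric_matrix g x = mat 1"
    using invertible_matrix_inv metric x unfolding pseudo_riemannian_on_def by blast+
  show "(\<Sum>k\<in>UNIV. g x i k * Gi x k j) = (if i = j then 1 else 0)" for i j
    using arg_cong[OF inv(1), of "\<lambda>A. A $ i $ j"]
    by (simp add: matrix_matrix_mult_def Gi_def inv_metric_def metric_matrix_def mat_def)
  show "(\<Sum>k\<in>UNIV. Gi x i k * g x k j) = (if i = j then 1 else 0)" for i j
    using arg_cong[OF inv(2), of "\<lambda>A. A $ i $ j"]
    by (simp add: matrix_matrix_mult_def Gi_def inv_metric_def metric_matrix_def mat_def)
  show "dg x a i j = dg x a j i" for a i j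
    unfolding dg_def
    by (rule pd_transform_within_open(1)[OF open_U x _ differentiable_coeffs(2)[OF x]]) (rule metric_sym)
  show "dg x a b c = (\<Sum>l\<in>UNIV. G x a b l * g x l c) + (\<Sum>l\<in>UNIV. Gs x a c l * g x b l)" for a b c
    using conjugate x unfolding dg_def conjugate_on_def by blast
qed (use x metric_sym torsion_free_G torsion_free_Gs ddlog_sym dP_def
      in \<open>auto simp: torsion_free_on_def\<close>)

lemma Gsh_eq:
  assumes x: "x \<in> U"
  shows "Gsh x i j m = G x i j m - g x i j * raise_index (Gi x) (dlog x) m"
proof -
  interpret gauge_coeffs "g x" "Gi x" "dg x" "G x" "Gs x" "dlog x" "ddlog x" "dP x"
    by (rule gauge_coeffs_at[OF x])
  have "Gsh x i j m = raise_index (Gi x) (\<lambda>k. (\<Sum>l\<in>UNIV. G x i j l * g x l k) - dlog x k * g x i j) m"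
    by (rule solve_lowered) (rule gauge_conj_lowered[OF x])
  also have "\<dots> = raise_index (Gi x) (\<lambda>k. \<Sum>l\<in>UNIV. G x i j l * g x l k) m - g x i j * grad m"
    by (simp add: raise_index_def right_diff_distrib sum_subtractf sum_distrib_left mult_ac)
  finally show ?thesis by (simp only: raise_lower_index)
qed

lemma gauge_conj_lowered_deriv:
  assumes x: "x \<in> U"
  shows "(\<Sum>l\<in>UNIV. pd (\<lambda>y. Gsh y i j l) a x * g x l k)
      = (\<Sum>l\<in>UNIV. pd (\<lambda>y. G y i j l) a x * g x l k)
        + g x i j * (\<Sum>l\<in>UNIV. raise_index (Gi x) (dlog x) l * dg x a l k)
        - dlog x k * dg x a i j - ddlog x a k * g x i j"
proof -
  note d = differentiable_coeffs[OF x] dlog_differentiable[OF x]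
  have "(\<lambda>y. \<Sum>l\<in>UNIV. Gsh y i j l * g y l k) differentiable at x"
    using d by (intro differentiable_sum differentiable_mult) auto
  then have "pd (\<lambda>y. \<Sum>l\<in>UNIV. Gsh y i j l * g y l k) a x
      = pd (\<lambda>y. (\<Sum>l\<in>UNIV. G y i j l * g y l k) - dlog y k * g y i j) a x"
    by (rule pd_transform_within_open(1)[OF open_U x gauge_conj_lowered, rotated])
  moreover have "pd (\<lambda>y. \<Sum>l\<in>UNIV. Gsh y i j l * g y l k) a x
      = (\<Sum>l\<in>UNIV. Gsh x i j l * dg x a l k + pd (\<lambda>y. Gsh y i j l) a x * g x l k)"
    using d by (simp add: pd_sum differentiable_mult pd_mult dg_def)
  moreover have "pd (\<lambda>y. (\<Sum>l\<in>UNIV. G y i j l * g y l k) - dlog y k * g y i j) a x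
      = (\<Sum>l\<in>UNIV. G x i j l * dg x a l k + pd (\<lambda>y. G y i j l) a x * g x l k)
        - (dlog x k * dg x a i j + ddlog x a k * g x i j)"
    using d by (simp add: pd_diff pd_sum differentiable_mult differentiable_sum pd_mult dg_def ddlog_def)
  moreover have "(\<Sum>l\<in>UNIV. Gsh x i j l * dg x a l k)
      = (\<Sum>l\<in>UNIV. G x i j l * dg x a l k) - g x i j * (\<Sum>l\<in>UNIV. raise_index (Gi x) (dlog x) l * dg x a l k)"
    by (simp add: Gsh_eq[OF x] left_diff_distrib right_diff_distrib sum_subtractf sum_distrib_left mult_ac)
  ultimately show ?thesis by (simp add: sum.distrib algebra_simps)
qed

lemma Gsh_deriv_eq:
  assumes x: "x \<in> U"
  shows "pd (\<lambda>y. Gsh y i j m) a x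
    = pd (\<lambda>y. G y i j m) a x - dg x a i j * raise_index (Gi x) (dlog x) m - g x i j * dP x a m"
proof -
  interpret gauge_coeffs "g x" "Gi x" "dg x" "G x" "Gs x" "dlog x" "ddlog x" "dP x"
    by (rule gauge_coeffs_at[OF x])
  have "pd (\<lambda>y. Gsh y i j m) a x = raise_index (Gi x) (\<lambda>k. (\<Sum>l\<in>UNIV. pd (\<lambda>y. G y i j l) a x * g x l k)
      + g x i j * (\<Sum>l\<in>UNIV. grad l * dg x a l k) - dlog x k * dg x a i j - ddlog x a k * g x i j) m"
    by (rule solve_lowered) (rule gauge_conj_lowered_deriv[OF x])
  also have "\<dots> = raise_index (Gi x) (\<lambda>k. \<Sum>l\<in>UNIV. pd (\<lambda>y. G y i j l) a x * g x l k) m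
      - dg x a i j * grad m - g x i j * dP x a m"
    by (simp add: dP_def raise_index_def distrib_left right_diff_distrib sum.distrib sum_subtractf
        sum_distrib_left mult_ac)
  finally show ?thesis by (simp only: raise_lower_index)
qed

lemma gauge_dual_deriv_eq:
  assumes x: "x \<in> U"
  shows "pd (\<lambda>y. gauge_dual q Gs y i j k) a x = pd (\<lambda>y. Gs y i j k) a x + projective_term (ddlog x a) i j k"
proof -
  note d = differentiable_coeffs(4)[OF x] dlog_differentiable[OF x]
  have "(\<lambda>y. gauge_dual q Gs y i j k) = (\<lambda>y. (Gs y i j k + dlog y i * (if k = j then 1 else 0))
      + dlog y j * (if k = i then 1 else 0))"
    by (simp add: gauge_dual_def dlog_def fun_eq_iff)
  then show ?thesis
    using d by (simp add: pd_add pd_mult_const differentiable_mult projective_term_def ddlog_def add.assoc)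
qed

lemma scalar_curv_gauge_metric:
  assumes x: "x \<in> U"
  shows "scalar_curv (gauge_metric q g) Gsh x = (\<Sum>a\<in>UNIV. \<Sum>b\<in>UNIV. Gi x a b * ricci Gsh x a b) / q x"
proof -
  have "metric_matrix (gauge_metric q g) x = q x *\<^sub>R metric_matrix g x"
    by (simp add: vec_eq_iff metric_matrix_def gauge_metric_def)
  moreover have "invertible (metric_matrix g x)"
    using metric x unfolding pseudo_riemannian_on_def by blast
  moreover have "q x \<noteq> 0" using q_pos x by auto
  ultimately have "inv_metric (gauge_metric q g) x = (1 / q x) *\<^sub>R inv_metric g x"
    unfolding inv_metric_def by (simp add: matrix_inv_scaleR)
  then show ?thesis
    unfolding scalar_curv_def by (simp add: Gi_def sum_divide_distrib)
qed

lemma bform_gauge_invariant: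
  assumes x: "x \<in> U"
  shows "bform (gauge_metric q g) Gsh (gauge_dual q Gs) x j k = bform g G Gs x j k"
proof -
  interpret gauge_coeffs "g x" "Gi x" "dg x" "G x" "Gs x" "dlog x" "ddlog x" "dP x"
    by (rule gauge_coeffs_at[OF x])
  have "ricci Gsh x a b = ricci_coeffs (\<lambda>i j k. G x i j k - g x i j * grad k)
      (\<lambda>c i j k. pd (\<lambda>y. G y i j k) c x - dg x c i j * grad k - g x i j * dP x c k) a b" for a b
    unfolding ricci_eq_ricci_coeffs Gsh_eq[OF x] Gsh_deriv_eq[OF x] ..
  moreover have "gauge_dual q Gs x = (\<lambda>i j k. Gs x i j k + projective_term (dlog x) i j k)"
    by (simp add: fun_eq_iff gauge_dual_def projective_term_def dlog_def add.assoc)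
  then have "ricci (gauge_dual q Gs) x j k = ricci_coeffs (\<lambda>i j k. Gs x i j k + projective_term (dlog x) i j k)
      (\<lambda>c i j k. pd (\<lambda>y. Gs y i j k) c x + projective_term (ddlog x c) i j k) j k"
    unfolding ricci_eq_ricci_coeffs gauge_dual_deriv_eq[OF x] by simp
  moreover have "q x \<noteq> 0" using q_pos x by auto
  ultimately show ?thesis
    using bform_coeffs_gauge_invariant[of "\<lambda>c i j k. pd (\<lambda>y. G y i j k) c x" j k]
    unfolding bform_def scalar_curv_gauge_metric[OF x]
    by (simp add: scalar_curv_def Gi_def ricci_eq_ricci_coeffs gauge_metric_def)
qed

end

theorem theorem9p18:
  fixes U :: "(real^'n) set"
    and g :: "real^'n \<Rightarrow> 'n \<Rightarrow> 'n \<Rightarrow> real"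
    and G Gs Gsh :: "real^'n \<Rightarrow> 'n \<Rightarrow> 'n \<Rightarrow> 'n \<Rightarrow> real"
    and q :: "real^'n \<Rightarrow> real"
  assumes "CARD('n) \<ge> 3"
    and "open U"
    and "pseudo_riemannian_on U g"
    and "connection_on U G" and "connection_on U Gs"
    and "torsion_free_on U G" and "torsion_free_on U Gs"
    and "conjugate_on U G g Gs"
    and "ricci_symmetric_on U Gs"
    and "smooth_fun_on U q" and "\<forall>x\<in>U. q x > 0"
    and "connection_on U Gsh"
    and "conjugate_on U Gsh (gauge_metric q g) (gauge_dual q Gs)"
  shows "\<forall>x\<in>U. \<forall>j k. bform (gauge_metric q g) Gsh (gauge_dual q Gs) x j k = bform g G Gs x j k"
proof -
  interpret gauge_transformation U g G Gs Gsh q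
    using assms(2-8,10-13) by unfold_locales
  show ?thesis using bform_gauge_invariant by blast
qed

end
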